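(* Let $\mathcal F$ be a proper filter on $\omega$. Then $\mathcal F$ is a non-meager P-filter if and only if every $\mathcal F$-tree of finite sets has a branch whose union belongs to $\mathcal F$.
   Context: A filter on $\omega$ is a family $\mathcal F\subseteq\mathcal P(\omega)$ closed under finite intersections and supersets and containing all cofinite sets; it is proper if all its members are infinite. $\mathcal P(\omega)$ is identified with $2^\omega$ via characteristic functions, with the product topology of the discrete space $\{0,1\}$; "meager" refers to this topology. $X\subseteq^* Y$ means $X\setminus Y$ is finite. $\mathcal F$ is a P-filter if for every sequence $\langle X_n:n\in\omega\rangle\subseteq\mathcal F$ there is $X\in\mathcal F$ with $X\subseteq^* X_n$ for all $n$. Let $[\omega]^{<\omega}$ denote the set of finite subsets of $\omega$. A tree of finite sets is a set $T$ of finite sequences of elements of $[\omega]^{<\omega}$ containing the empty sequence and closed under initial segments; it is an $\mathcal F$-tree of finite sets if for each $\bar s\in T$ there is $X_{\bar s}\in\mathcal F$ such that $\bar s^\frown a\in T$ for every finite $a\subseteq X_{\bar s}$. A branch is an infinite sequence $\langle s_k:k\in\omega\rangle$ all of whose finite initial segments lie in $T$; its union is $\bigcup_k s_k$. *)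

theory Defs
  imports "HOL-Analysis.Analysis"
begin

definition cantor_top :: "(nat \<Rightarrow> bool) topology" where
  "cantor_top = product_topology (\<lambda>_. discrete_topology (UNIV :: bool set)) UNIV"

definition nowhere_dense_in :: "'a topology \<Rightarrow> 'a set \<Rightarrow> bool" where
  "nowhere_dense_in X S \<longleftrightarrow> S \<subseteq> topspace X \<and> X interior_of (X closure_of S) = {}"

definition meager_in :: "'a topology \<Rightarrow> 'a set \<Rightarrow> bool" where
  "meager_in X S \<longleftrightarrow> (\<exists>N :: nat \<Rightarrow> 'a set. (\<forall>n. nowhere_dense_in X (N n)) \<and> S \<subseteq> (\<Union>n. N n))"

text \<open>Identification of P(omega) with 2^omega via characteristic functions.\<close>
definition char_fun :: "nat set \<Rightarrow> (nat \<Rightarrow> bool)" where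
  "char_fun A = (\<lambda>n. n \<in> A)"

definition is_filter_on_omega :: "nat set set \<Rightarrow> bool" where
  "is_filter_on_omega F \<longleftrightarrow>
     (\<forall>X\<in>F. \<forall>Y\<in>F. X \<inter> Y \<in> F) \<and>
     (\<forall>X\<in>F. \<forall>Y. X \<subseteq> Y \<longrightarrow> Y \<in> F) \<and>
     (\<forall>X. finite (- X) \<longrightarrow> X \<in> F)"

definition proper_filter :: "nat set set \<Rightarrow> bool" where
  "proper_filter F \<longleftrightarrow> is_filter_on_omega F \<and> (\<forall>X\<in>F. infinite X)"

definition almost_subset :: "nat set \<Rightarrow> nat set \<Rightarrow> bool" where
  "almost_subset X Y \<longleftrightarrow> finite (X - Y)"

definition P_filter :: "nat set set \<Rightarrow> bool" where
  "P_filter F \<longleftrightarrow> (\<forall>Xs :: nat \<Rightarrow> nat set. (\<forall>n. Xs n \<in> F) \<longrightarrow>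
                    (\<exists>X\<in>F. \<forall>n. almost_subset X (Xs n)))"

definition non_meager_filter :: "nat set set \<Rightarrow> bool" where
  "non_meager_filter F \<longleftrightarrow> \<not> meager_in cantor_top (char_fun ` F)"

definition tree_of_finite_sets :: "nat set list set \<Rightarrow> bool" where
  "tree_of_finite_sets T \<longleftrightarrow>
     [] \<in> T \<and> (\<forall>s\<in>T. \<forall>a\<in>set s. finite a) \<and> (\<forall>s\<in>T. \<forall>k. take k s \<in> T)"

definition F_tree :: "nat set set \<Rightarrow> nat set list set \<Rightarrow> bool" where
  "F_tree F T \<longleftrightarrow> tree_of_finite_sets T \<and>
     (\<forall>s\<in>T. \<exists>X\<in>F. \<forall>a. finite a \<and> a \<subseteq> X \<longrightarrow> s @ [a] \<in> T)"

definition is_branch :: "nat set list set \<Rightarrow> (nat \<Rightarrow> nat set) \<Rightarrow> bool" where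
  "is_branch T b \<longleftrightarrow> (\<forall>k. map b [0..<k] \<in> T)"

definition branch_union :: "(nat \<Rightarrow> nat set) \<Rightarrow> nat set" where
  "branch_union b = (\<Union>k. b k)"

end

theory Submission
  imports
    Defs
    "HOL-Complex_Analysis.Weierstrass_Factorization" (* strict_mono_sequence_partition *)
begin

(*
  Forward direction: by the P-property a single X in F lies, above a threshold g m, inside a
  set W m in F that is a valid successor set for every node of length at most m with entries
  below m. By non-meagerness (the easy half of Talagrand's characterization) some Z in F misses
  the gaps [c k, g (c k)) of a strictly increasing sequence c, and then the pieces of X \<inter> Z
  between consecutive c k form a branch whose union is X \<inter> Z above c 0.

  Backward direction: the tree whose successor sets at level k are X 0 \<inter> ... \<inter> X k has branches
  that are pseudo-intersections of the X k. If F were covered by nowhere dense sets N k, one finds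
  patterns \<tau> k m on intervals [m, n k m) that keep every set away from N k, and a tree which
  after each node reserves such an interval: the union of a branch with all reserved patterns
  lies in F but in no N k.
*)

section \<open>Interval partitions of the natural numbers\<close>

lemma strict_mono_UN_blocks:
  fixes c :: "nat \<Rightarrow> nat"
  assumes "strict_mono c"
  shows "(\<Union>k. {c k..<c (Suc k)}) = {c 0..}"
proof
  show "(\<Union>k. {c k..<c (Suc k)}) \<subseteq> {c 0..}"
  proof (rule UN_least)
    fix k
    have "c 0 \<le> c k"
      using strict_mono_less_eq[OF assms] by simp
    then show "{c k..<c (Suc k)} \<subseteq> {c 0..}"
      by auto
  qed
  show "{c 0..} \<subseteq> (\<Union>k. {c k..<c (Suc k)})"
  proof
    fix x assume "x \<in> {c 0..}"
    then have "c 0 \<le> x"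
      by simp
    then obtain k where "x \<in> {c k..<c (Suc k)}"
      using strict_mono_sequence_partition[OF assms _ filterlim_subseq[OF assms]] by blast
    then show "x \<in> (\<Union>k. {c k..<c (Suc k)})"
      by blast
  qed
qed

lemma strict_mono_blocks_disjoint:
  fixes c :: "nat \<Rightarrow> nat"
  assumes "strict_mono c" "j \<noteq> k"
  shows "{c j..<c (Suc j)} \<inter> {c k..<c (Suc k)} = {}"
proof -
  have "j = k" if i: "i \<in> {c j..<c (Suc j)}" "i \<in> {c k..<c (Suc k)}" for i
  proof -
    have "c 0 \<le> i"
      using i(1) strict_mono_less_eq[OF assms(1), of 0 j] by simp
    then have "\<exists>!k. i \<in> {c k..<c (Suc k)}"
      using strict_mono_sequence_partition'[OF assms(1) _ filterlim_subseq[OF assms(1)]] by blast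
    with i show "j = k"
      by metis
  qed
  with assms(2) show ?thesis
    by blast
qed

lemma interleaved_intervals_UN_Int:
  fixes \<mu> \<nu> :: "nat \<Rightarrow> nat"
  assumes "\<And>k. \<mu> k < \<nu> k" "\<And>k. \<nu> k \<le> \<mu> (Suc k)"
    and A: "\<And>k. A k \<subseteq> {\<mu> k..<\<nu> k}" and B: "\<And>k. B k \<subseteq> {\<nu> k..<\<mu> (Suc k)}"
  shows "((\<Union>j. A j) \<union> (\<Union>j. B j)) \<inter> {\<mu> k..<\<nu> k} = A k"
proof -
  have "\<mu> j < \<mu> (Suc j)" for j
    using assms(1)[of j] assms(2)[of j] by (rule less_le_trans)
  then have "strict_mono \<mu>"
    by (simp add: strict_mono_Suc_iff)
  have "A j \<union> B j \<subseteq> {\<mu> j..<\<mu> (Suc j)}" for j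
    using assms(1,2)[of j] A[of j] B[of j] by fastforce
  moreover have "{\<mu> k..<\<nu> k} \<subseteq> {\<mu> k..<\<mu> (Suc k)}"
    using assms(2)[of k] by auto
  ultimately have other_blocks: "(A j \<union> B j) \<inter> {\<mu> k..<\<nu> k} = {}" if "j \<noteq> k" for j
    using strict_mono_blocks_disjoint[OF \<open>strict_mono \<mu>\<close> that] by blast
  have "B k \<inter> {\<mu> k..<\<nu> k} = {}"
    using B[of k] by auto
  show ?thesis
  proof (intro equalityI subsetI)
    fix i assume i: "i \<in> ((\<Union>j. A j) \<union> (\<Union>j. B j)) \<inter> {\<mu> k..<\<nu> k}"
    then obtain j where j: "i \<in> A j \<union> B j"
      by blast
    with i other_blocks have "j = k"
      by blast
    with i j \<open>B k \<inter> {\<mu> k..<\<nu> k} = {}\<close> show "i \<in> A k"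
      by blast
  next
    fix i assume "i \<in> A k"
    with A[of k] show "i \<in> ((\<Union>j. A j) \<union> (\<Union>j. B j)) \<inter> {\<mu> k..<\<nu> k}"
      by blast
  qed
qed

section \<open>Cylinders and nowhere dense sets in Cantor space\<close>

definition cylinder :: "nat \<Rightarrow> (nat \<Rightarrow> bool) \<Rightarrow> (nat \<Rightarrow> bool) set" where
  "cylinder n p = {f. \<forall>i<n. f i = p i}"

lemma self_in_cylinder [simp]: "p \<in> cylinder n p"
  by (simp add: cylinder_def)

lemma cylinder_subset: "n \<le> n' \<Longrightarrow> (\<And>i. i < n \<Longrightarrow> q i = p i) \<Longrightarrow> cylinder n' q \<subseteq> cylinder n p"
  by (auto simp: cylinder_def)

lemma topspace_cantor_top [simp]: "topspace cantor_top = UNIV"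
  by (simp add: cantor_top_def PiE_UNIV_domain)

lemma openin_cylinder: "openin cantor_top (cylinder n p)"
proof -
  have "cylinder n p = Pi\<^sub>E UNIV (\<lambda>i. if i < n then {p i} else UNIV)"
    by (auto simp: cylinder_def PiE_UNIV_domain Pi_iff split: if_splits)
  moreover have "finite {i. (if i < n then {p i} else UNIV) \<noteq> UNIV}"
    by (rule finite_subset[of _ "{..<n}"]) auto
  ultimately show ?thesis
    by (simp add: cantor_top_def openin_PiE_gen)
qed

lemma openin_cantor_top_contains_cylinder:
  assumes "openin cantor_top S" "x \<in> S"
  obtains n where "cylinder n x \<subseteq> S"
proof -
  obtain U where U: "finite {i \<in> UNIV. U i \<noteq> topspace (discrete_topology (UNIV :: bool set))}"
      "x \<in> Pi\<^sub>E UNIV U" "Pi\<^sub>E UNIV U \<subseteq> S"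
    using assms unfolding cantor_top_def openin_product_topology_alt by blast
  then have "finite {i. U i \<noteq> UNIV}"
    by simp
  then obtain n where n: "{i. U i \<noteq> UNIV} \<subseteq> {..<n}"
    using finite_nat_bounded by blast
  have "cylinder n x \<subseteq> Pi\<^sub>E UNIV U"
  proof
    fix y assume y: "y \<in> cylinder n x"
    have "y i \<in> U i" for i
    proof (cases "i < n")
      case True
      then show ?thesis
        using y U(2) by (simp add: cylinder_def PiE_UNIV_domain Pi_iff)
    next
      case False
      then show ?thesis
        using n by auto
    qed
    then show "y \<in> Pi\<^sub>E UNIV U"
      by (simp add: PiE_UNIV_domain)
  qed
  then show thesis
    using U(3) by (intro that) (rule order_trans)
qed

lemma nowhere_dense_in_cantor_topD:
  assumes "nowhere_dense_in cantor_top N"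
  obtains n' q where "n \<le> n'" "\<And>i. i < n \<Longrightarrow> q i = p i" "cylinder n' q \<inter> N = {}"
proof -
  have "cantor_top interior_of (cantor_top closure_of N) = {}"
    using assms by (simp add: nowhere_dense_in_def)
  then have "\<not> cylinder n p \<subseteq> cantor_top closure_of N"
    using openin_cylinder[of n p] unfolding interior_of_eq_empty
    by (metis empty_iff self_in_cylinder)
  then obtain q where q: "q \<in> cylinder n p" "q \<notin> cantor_top closure_of N"
    by blast
  have "openin cantor_top (cylinder n p - cantor_top closure_of N)"
    by (simp add: openin_cylinder openin_diff)
  then obtain n2 where "cylinder n2 q \<subseteq> cylinder n p - cantor_top closure_of N"
    using openin_cantor_top_contains_cylinder[OF _ DiffI[OF q]] by blast
  moreover have "cylinder (max n n2) q \<subseteq> cylinder n2 q"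
    by (rule cylinder_subset) auto
  moreover have "N \<subseteq> cantor_top closure_of N"
    by (simp add: closure_of_subset)
  ultimately have "cylinder (max n n2) q \<inter> N = {}"
    by blast
  moreover have "q i = p i" if "i < n" for i
    using q(1) that by (simp add: cylinder_def)
  ultimately show thesis
    by (intro that[of "max n n2" q]) simp_all
qed

lemma nowhere_dense_in_cantor_topI:
  assumes "\<And>n p. \<exists>n' q. n \<le> n' \<and> (\<forall>i<n. q i = p i) \<and> cylinder n' q \<inter> N = {}"
  shows "nowhere_dense_in cantor_top N"
proof -
  have "cantor_top interior_of (cantor_top closure_of N) = {}"
  proof (rule ccontr)
    assume "cantor_top interior_of (cantor_top closure_of N) \<noteq> {}"
    then obtain x where "x \<in> cantor_top interior_of (cantor_top closure_of N)"
      by blast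
    then obtain n where n: "cylinder n x \<subseteq> cantor_top interior_of (cantor_top closure_of N)"
      using openin_cantor_top_contains_cylinder[OF openin_interior_of] by metis
    obtain n' q where q: "n \<le> n'" "\<forall>i<n. q i = x i" "cylinder n' q \<inter> N = {}"
      using assms[of n x] by blast
    have "cylinder n' q \<subseteq> cylinder n x"
      using q(1,2) by (simp add: cylinder_subset)
    also have "\<dots> \<subseteq> cantor_top interior_of (cantor_top closure_of N)"
      by (fact n)
    also have "\<dots> \<subseteq> cantor_top closure_of N"
      by (rule interior_of_subset)
    finally have "cylinder n' q \<subseteq> cantor_top closure_of N" .
    moreover have "cylinder n' q \<inter> cantor_top closure_of N = {}"
      using q(3) by (simp add: openin_Int_closure_of_eq_empty openin_cylinder)
    ultimately show False
      using self_in_cylinder by blast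
  qed
  then show ?thesis
    by (simp add: nowhere_dense_in_def)
qed

lemma nowhere_dense_common_extension:
  assumes "nowhere_dense_in cantor_top N" "finite S" "S \<subseteq> Pow {..<m}"
  shows "\<exists>n \<tau>. m < n \<and> \<tau> \<subseteq> {m..<n} \<and> (\<forall>\<sigma>\<in>S. cylinder n (char_fun (\<sigma> \<union> \<tau>)) \<inter> N = {})"
  using assms(2,3)
proof (induction S rule: finite_induct)
  case empty
  show ?case
    by (intro exI[of _ "Suc m"] exI[of _ "{}"]) auto
next
  case (insert \<sigma>\<^sub>0 S)
  then obtain n \<tau> where n: "m < n" "\<tau> \<subseteq> {m..<n}"
    and disjoint: "\<forall>\<sigma>\<in>S. cylinder n (char_fun (\<sigma> \<union> \<tau>)) \<inter> N = {}"
    by blast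
  obtain n' q where q: "n \<le> n'" "\<And>i. i < n \<Longrightarrow> q i = char_fun (\<sigma>\<^sub>0 \<union> \<tau>) i"
    "cylinder n' q \<inter> N = {}"
    using nowhere_dense_in_cantor_topD[OF assms(1), where n = n and p = "char_fun (\<sigma>\<^sub>0 \<union> \<tau>)"]
    by blast
  define \<tau>' where "\<tau>' = \<tau> \<union> {i\<in>{n..<n'}. q i}"
  have agree: "char_fun (\<sigma> \<union> \<tau>') i = char_fun (\<sigma> \<union> \<tau>) i" if "i < n" for \<sigma> i
    using that by (auto simp: \<tau>'_def char_fun_def)
  have "cylinder n' (char_fun (\<sigma>\<^sub>0 \<union> \<tau>')) = cylinder n' q"
  proof -
    have "char_fun (\<sigma>\<^sub>0 \<union> \<tau>') i = q i" if "i < n'" for i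
    proof (cases "i < n")
      case True
      then show ?thesis
        using agree q(2) by simp
    next
      case False
      then show ?thesis
        using insert.prems n that by (auto simp: \<tau>'_def char_fun_def)
    qed
    then show ?thesis
      by (auto simp: cylinder_def)
  qed
  moreover have "cylinder n' (char_fun (\<sigma> \<union> \<tau>')) \<subseteq> cylinder n (char_fun (\<sigma> \<union> \<tau>))" for \<sigma>
    using q(1) agree by (rule cylinder_subset)
  ultimately have "\<forall>\<sigma>\<in>insert \<sigma>\<^sub>0 S. cylinder n' (char_fun (\<sigma> \<union> \<tau>')) \<inter> N = {}"
    using q(3) disjoint by blast
  moreover have "\<tau>' \<subseteq> {m..<n'}"
    using n q(1) by (fastforce simp: \<tau>'_def)
  ultimately show ?case
    using n(1) q(1) by (intro exI[of _ n'] exI[of _ \<tau>']) simp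
qed

lemma meager_in_cantor_top_avoids_patterns:
  assumes "meager_in cantor_top A"
  obtains n :: "nat \<Rightarrow> nat \<Rightarrow> nat" and \<tau> :: "nat \<Rightarrow> nat \<Rightarrow> nat set"
  where "\<And>k m. m < n k m" "\<And>k m. \<tau> k m \<subseteq> {m..<n k m}"
    and "\<And>x. x \<in> A \<Longrightarrow> \<exists>k. \<forall>m. \<exists>i\<in>{m..<n k m}. x i \<noteq> (i \<in> \<tau> k m)"
proof -
  obtain N :: "nat \<Rightarrow> (nat \<Rightarrow> bool) set"
    where N: "\<And>k. nowhere_dense_in cantor_top (N k)" "A \<subseteq> (\<Union>k. N k)"
    using assms unfolding meager_in_def by blast
  define extends where "extends k m n \<tau> \<longleftrightarrow> m < n \<and> \<tau> \<subseteq> {m..<n} \<and>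
      (\<forall>\<sigma>\<in>Pow {..<m}. cylinder n (char_fun (\<sigma> \<union> \<tau>)) \<inter> N k = {})" for k m n \<tau>
  have "\<exists>n \<tau>. extends k m n \<tau>" for k m
    unfolding extends_def by (rule nowhere_dense_common_extension[OF N(1)]) simp_all
  then obtain n \<tau> where "\<And>k m. extends k m (n k m) (\<tau> k m)"
    by metis
  then have n: "\<And>k m. m < n k m" and \<tau>: "\<And>k m. \<tau> k m \<subseteq> {m..<n k m}"
    and disjoint: "\<And>k m \<sigma>. \<sigma> \<subseteq> {..<m} \<Longrightarrow> cylinder (n k m) (char_fun (\<sigma> \<union> \<tau> k m)) \<inter> N k = {}"
    by (auto simp: extends_def)
  have "\<exists>k. \<forall>m. \<exists>i\<in>{m..<n k m}. x i \<noteq> (i \<in> \<tau> k m)" if x: "x \<in> A" for x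
  proof -
    obtain k where "x \<in> N k"
      using N(2) x by blast
    have "\<exists>i\<in>{m..<n k m}. x i \<noteq> (i \<in> \<tau> k m)" for m
    proof (rule ccontr)
      assume "\<not> ?thesis"
      then have "x \<in> cylinder (n k m) (char_fun ({i. x i} \<inter> {..<m} \<union> \<tau> k m))"
        using \<tau>[of k m] by (auto simp: cylinder_def char_fun_def)
      then show False
        using disjoint[of "{i. x i} \<inter> {..<m}" m k] \<open>x \<in> N k\<close> by blast
    qed
    then show ?thesis
      by blast
  qed
  with n \<tau> show thesis
    by (rule that)
qed

lemma nowhere_dense_hits_all_blocks_from:
  assumes "strict_mono m"
  shows "nowhere_dense_in cantor_top {x. \<forall>j\<ge>k. \<exists>i\<in>{m j..<m (Suc j)}. x i}"
proof (rule nowhere_dense_in_cantor_topI)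
  fix n p
  define j where "j = max k n"
  define q where "q i = (i < n \<and> p i)" for i
  have "n \<le> m j"
    using seq_suble[OF assms, of j] by (simp add: j_def)
  have "cylinder (m (Suc j)) q \<inter> {x. \<forall>j\<ge>k. \<exists>i\<in>{m j..<m (Suc j)}. x i} = {}"
  proof safe
    fix x assume x: "x \<in> cylinder (m (Suc j)) q" "\<forall>j\<ge>k. \<exists>i\<in>{m j..<m (Suc j)}. x i"
    moreover have "k \<le> j"
      by (simp add: j_def)
    ultimately obtain i where i: "i \<in> {m j..<m (Suc j)}" "x i"
      by blast
    with x(1) have "q i"
      by (simp add: cylinder_def)
    with i(1) \<open>n \<le> m j\<close> show "x \<in> {}"
      by (simp add: q_def)
  qed
  moreover have "n \<le> m (Suc j)"
    using \<open>n \<le> m j\<close> strict_mono_less_eq[OF assms, of j "Suc j"] by simp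
  ultimately show "\<exists>n' q. n \<le> n' \<and> (\<forall>i<n. q i = p i) \<and>
      cylinder n' q \<inter> {x. \<forall>j\<ge>k. \<exists>i\<in>{m j..<m (Suc j)}. x i} = {}"
    by (intro exI[of _ "m (Suc j)"] exI[of _ q]) (simp add: q_def)
qed

lemma non_meager_filter_avoids_infinitely_many_blocks:
  assumes "non_meager_filter F" "strict_mono m"
  shows "\<exists>Z\<in>F. infinite {j. Z \<inter> {m j..<m (Suc j)} = {}}"
proof (rule ccontr)
  assume none: "\<not> ?thesis"
  define N where "N k = {x. \<forall>j\<ge>k. \<exists>i\<in>{m j..<m (Suc j)}. x i}" for k
  have "char_fun Z \<in> (\<Union>k. N k)" if "Z \<in> F" for Z
  proof -
    have "finite {j. Z \<inter> {m j..<m (Suc j)} = {}}"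
      using none that by blast
    then obtain k where k: "{j. Z \<inter> {m j..<m (Suc j)} = {}} \<subseteq> {..<k}"
      using finite_nat_bounded by blast
    have "\<exists>i\<in>{m j..<m (Suc j)}. char_fun Z i" if "k \<le> j" for j
    proof -
      have "Z \<inter> {m j..<m (Suc j)} \<noteq> {}"
        using k that by auto
      then show ?thesis
        by (auto simp: char_fun_def)
    qed
    then show ?thesis
      by (auto simp: N_def)
  qed
  moreover have "nowhere_dense_in cantor_top (N k)" for k
    unfolding N_def using assms(2) by (rule nowhere_dense_hits_all_blocks_from)
  ultimately have "meager_in cantor_top (char_fun ` F)"
    unfolding meager_in_def by blast
  with assms(1) show False
    by (simp add: non_meager_filter_def)
qed

lemma non_meager_filter_avoids_gaps:
  fixes g :: "nat \<Rightarrow> nat"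
  assumes "non_meager_filter F"
  obtains Z and c :: "nat \<Rightarrow> nat" where "Z \<in> F" "strict_mono c" "\<And>k. Z \<inter> {c k..<g (c k)} = {}"
proof -
  \<comment> \<open>Each block [m j, m (Suc j)) contains the gap [m j, g (m j)).\<close>
  define m where "m j = ((\<lambda>n. max (Suc n) (g n)) ^^ j) 0" for j
  have m_Suc: "m (Suc j) = max (Suc (m j)) (g (m j))" for j
    by (simp add: m_def)
  then have "strict_mono m"
    by (simp add: strict_mono_Suc_iff less_max_iff_disj)
  then obtain Z where Z: "Z \<in> F" and skipped: "infinite {j. Z \<inter> {m j..<m (Suc j)} = {}}"
    using non_meager_filter_avoids_infinitely_many_blocks[OF assms] by blast
  let ?a = "enumerate {j. Z \<inter> {m j..<m (Suc j)} = {}}"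
  have "strict_mono (m \<circ> ?a)"
    using \<open>strict_mono m\<close> strict_mono_enumerate[OF skipped] by (rule strict_mono_o)
  moreover have "Z \<inter> {m (?a k)..<g (m (?a k))} = {}" for k
    using enumerate_in_set[OF skipped, of k] by (auto simp: m_Suc)
  ultimately show thesis
    using Z by (intro that[of Z "m \<circ> ?a"]) simp_all
qed

section \<open>Filters on the natural numbers\<close>

lemma filter_on_omega_Int: "is_filter_on_omega F \<Longrightarrow> X \<in> F \<Longrightarrow> Y \<in> F \<Longrightarrow> X \<inter> Y \<in> F"
  by (simp add: is_filter_on_omega_def)

lemma filter_on_omega_mono: "is_filter_on_omega F \<Longrightarrow> X \<in> F \<Longrightarrow> X \<subseteq> Y \<Longrightarrow> Y \<in> F"
  unfolding is_filter_on_omega_def by blast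

lemma filter_on_omega_cofinite: "is_filter_on_omega F \<Longrightarrow> finite (- X) \<Longrightarrow> X \<in> F"
  by (simp add: is_filter_on_omega_def)

lemma filter_on_omega_atLeast: "is_filter_on_omega F \<Longrightarrow> {n..} \<in> F"
  by (rule filter_on_omega_cofinite) simp_all

lemma filter_on_omega_INT:
  assumes "is_filter_on_omega F" "finite S" "\<And>x. x \<in> S \<Longrightarrow> A x \<in> F"
  shows "(\<Inter>x\<in>S. A x) \<in> F"
  using assms(2,3)
proof (induction S rule: finite_induct)
  case empty
  show ?case
    using filter_on_omega_cofinite[OF assms(1)] by simp
next
  case (insert x S)
  then show ?case
    using filter_on_omega_Int[OF assms(1)] by simp
qed

lemma P_filter_eventually_subset:
  fixes W :: "nat \<Rightarrow> nat set"
  assumes "P_filter F" "\<And>m. W m \<in> F"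
  obtains X and g :: "nat \<Rightarrow> nat" where "X \<in> F" "\<And>m. X \<inter> {g m..} \<subseteq> W m"
proof -
  obtain X where X: "X \<in> F" "\<And>m. finite (X - W m)"
    using assms(1)[unfolded P_filter_def, rule_format, of W] assms(2)
    unfolding almost_subset_def by blast
  have "\<exists>n. X \<inter> {n..} \<subseteq> W m" for m
  proof -
    obtain n where "X - W m \<subseteq> {..<n}"
      using X(2) finite_nat_bounded by blast
    then have "X \<inter> {n..} \<subseteq> W m"
      by auto
    then show ?thesis ..
  qed
  then obtain g where "\<And>m. X \<inter> {g m..} \<subseteq> W m"
    by metis
  with X(1) show thesis
    by (rule that)
qed

section \<open>Trees of finite sets\<close>

lemma F_tree_uniform_successor_sets:
  assumes "is_filter_on_omega F" "F_tree F T"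
  obtains W where "\<And>m. W m \<in> F"
    and "\<And>m t a. t \<in> T \<Longrightarrow> length t \<le> m \<Longrightarrow> set t \<subseteq> Pow {..<m} \<Longrightarrow> finite a \<Longrightarrow> a \<subseteq> W m
           \<Longrightarrow> t @ [a] \<in> T"
proof -
  obtain X where X: "\<And>t. t \<in> T \<Longrightarrow> X t \<in> F \<and> (\<forall>a. finite a \<and> a \<subseteq> X t \<longrightarrow> t @ [a] \<in> T)"
    using assms(2) unfolding F_tree_def by metis
  define W where "W m = (\<Inter>t \<in> T \<inter> {t. set t \<subseteq> Pow {..<m} \<and> length t \<le> m}. X t)" for m
  have "finite {t. set t \<subseteq> Pow {..<m} \<and> length t \<le> m}" for m :: nat
    by (rule finite_lists_length_le) simp
  then have "W m \<in> F" for m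
    unfolding W_def using X by (intro filter_on_omega_INT[OF assms(1)]) auto
  moreover have "t @ [a] \<in> T"
    if "t \<in> T" "length t \<le> m" "set t \<subseteq> Pow {..<m}" "finite a" "a \<subseteq> W m" for m t a
  proof -
    have "W m \<subseteq> X t"
      using that(1-3) unfolding W_def by blast
    with that(1,4,5) X show ?thesis
      by blast
  qed
  ultimately show thesis
    by (rule that)
qed

definition successor_tree :: "(nat set list \<Rightarrow> nat set) \<Rightarrow> nat set list set" where
  "successor_tree G = {s. \<forall>i<length s. finite (s ! i) \<and> s ! i \<subseteq> G (take i s)}"

lemma F_tree_successor_tree:
  assumes "\<And>s. G s \<in> F"
  shows "F_tree F (successor_tree G)"
  unfolding F_tree_def tree_of_finite_sets_def
proof (intro conjI ballI allI)
  show "[] \<in> successor_tree G"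
    by (simp add: successor_tree_def)
next
  fix s a assume "s \<in> successor_tree G" "a \<in> set s"
  then show "finite a"
    by (auto simp: successor_tree_def in_set_conv_nth)
next
  fix s k assume "s \<in> successor_tree G"
  then show "take k s \<in> successor_tree G"
    by (simp add: successor_tree_def)
next
  fix s assume s: "s \<in> successor_tree G"
  have "s @ [a] \<in> successor_tree G" if "finite a" "a \<subseteq> G s" for a
    using s that by (auto simp: successor_tree_def nth_append less_Suc_eq)
  with assms show "\<exists>X\<in>F. \<forall>a. finite a \<and> a \<subseteq> X \<longrightarrow> s @ [a] \<in> successor_tree G"
    by blast
qed

lemma is_branch_successor_tree_iff:
  "is_branch (successor_tree G) b \<longleftrightarrow> (\<forall>k. finite (b k) \<and> b k \<subseteq> G (map b [0..<k]))"
proof -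
  have "map b [0..<k] \<in> successor_tree G \<longleftrightarrow> (\<forall>i<k. finite (b i) \<and> b i \<subseteq> G (map b [0..<i]))" for k
    by (simp add: successor_tree_def take_map)
  then show ?thesis
    unfolding is_branch_def by (meson lessI less_trans)
qed

lemma is_branch_gap_blocks:
  fixes c g :: "nat \<Rightarrow> nat"
  assumes "[] \<in> T"
    and successors: "\<And>m t a. t \<in> T \<Longrightarrow> length t \<le> m \<Longrightarrow> set t \<subseteq> Pow {..<m} \<Longrightarrow> finite a
                        \<Longrightarrow> a \<subseteq> W m \<Longrightarrow> t @ [a] \<in> T"
    and "\<And>m. Y \<inter> {g m..} \<subseteq> W m"
    and "strict_mono c" "\<And>k. Y \<inter> {c k..<g (c k)} = {}"
  shows "is_branch T (\<lambda>k. Y \<inter> {c k..<c (Suc k)})"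
proof -
  define b where "b k = Y \<inter> {c k..<c (Suc k)}" for k
  have b_successor: "b k \<subseteq> W (c k)" for k
  proof
    fix y assume y: "y \<in> b k"
    then have "y \<notin> {c k..<g (c k)}"
      using assms(5)[of k] by (auto simp: b_def)
    with y have "y \<in> Y \<inter> {g (c k)..}"
      by (auto simp: b_def)
    with assms(3) show "y \<in> W (c k)"
      by blast
  qed
  have prefix_below: "set (map b [0..<k]) \<subseteq> Pow {..<c k}" for k
  proof -
    have "b i \<subseteq> {..<c k}" if "i < k" for i
    proof -
      have "c (Suc i) \<le> c k"
        using that strict_mono_less_eq[OF assms(4)] by simp
      then show ?thesis
        by (auto simp: b_def)
    qed
    then show ?thesis
      by fastforce
  qed
  have "map b [0..<k] \<in> T" for k
  proof (induction k)
    case 0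
    then show ?case
      using assms(1) by simp
  next
    case (Suc k)
    have "map b [0..<k] @ [b k] \<in> T"
    proof (rule successors[OF Suc])
      show "length (map b [0..<k]) \<le> c k"
        using seq_suble[OF assms(4)] by simp
      show "finite (b k)"
        by (simp add: b_def)
    qed (fact prefix_below b_successor)+
    then show ?case
      by simp
  qed
  then have "is_branch T b"
    by (simp add: is_branch_def)
  then show ?thesis
    by (simp add: b_def[abs_def])
qed

(* The sum of a finite set of naturals exceeds its elements, so frontier n s lies above all
   entries of s and above every interval [frontier n t, n (length t) (frontier n t)) for a
   proper prefix t of s. *)
definition frontier :: "(nat \<Rightarrow> nat \<Rightarrow> nat) \<Rightarrow> nat set list \<Rightarrow> nat" where
  "frontier n s = foldl (\<lambda>m (k, a). n k m + Suc (\<Sum>a)) 0 (List.enumerate 0 s)"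

lemma frontier_snoc [simp]: "frontier n (s @ [a]) = n (length s) (frontier n s) + Suc (\<Sum>a)"
  by (simp add: frontier_def enumerate_append_eq)

lemma branch_in_filter_if_non_meager_P_filter:
  assumes "is_filter_on_omega F" "non_meager_filter F" "P_filter F" "F_tree F T"
  shows "\<exists>b. is_branch T b \<and> branch_union b \<in> F"
proof -
  obtain W where W: "\<And>m. W m \<in> F"
    and W_successors: "\<And>m t a. t \<in> T \<Longrightarrow> length t \<le> m \<Longrightarrow> set t \<subseteq> Pow {..<m} \<Longrightarrow> finite a
                          \<Longrightarrow> a \<subseteq> W m \<Longrightarrow> t @ [a] \<in> T"
    using F_tree_uniform_successor_sets[OF assms(1,4)] by metis
  obtain X g where X: "X \<in> F" "\<And>m. X \<inter> {g m..} \<subseteq> W m"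
    using P_filter_eventually_subset[OF assms(3), of W] W by metis
  obtain Z and c :: "nat \<Rightarrow> nat" where Z: "Z \<in> F" "strict_mono c" "\<And>k. Z \<inter> {c k..<g (c k)} = {}"
    using non_meager_filter_avoids_gaps[OF assms(2)] by metis
  have "[] \<in> T"
    using assms(4) by (simp add: F_tree_def tree_of_finite_sets_def)
  moreover have "X \<inter> Z \<inter> {g m..} \<subseteq> W m" for m
    using X(2) by blast
  moreover have "X \<inter> Z \<inter> {c k..<g (c k)} = {}" for k
    using Z(3) by blast
  ultimately have "is_branch T (\<lambda>k. X \<inter> Z \<inter> {c k..<c (Suc k)})"
    using W_successors Z(2) by (rule_tac is_branch_gap_blocks) simp_all
  moreover have "branch_union (\<lambda>k. X \<inter> Z \<inter> {c k..<c (Suc k)}) = X \<inter> Z \<inter> {c 0..}"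
    using strict_mono_UN_blocks[OF Z(2)] by (auto simp: branch_union_def)
  moreover have "X \<inter> Z \<inter> {c 0..} \<in> F"
    using X(1) Z(1) by (intro filter_on_omega_Int filter_on_omega_atLeast assms(1))
  ultimately show ?thesis
    by auto
qed

lemma P_filter_if_branches_in_filter:
  assumes "is_filter_on_omega F"
    and "\<And>T. F_tree F T \<Longrightarrow> \<exists>b. is_branch T b \<and> branch_union b \<in> F"
  shows "P_filter F"
  unfolding P_filter_def
proof (intro allI impI)
  fix Xs :: "nat \<Rightarrow> nat set" assume Xs: "\<forall>n. Xs n \<in> F"
  define Y where "Y n = (\<Inter>i\<le>n. Xs i)" for n
  have "Y n \<in> F" for n
    unfolding Y_def using Xs by (intro filter_on_omega_INT[OF assms(1)]) auto
  then have "F_tree F (successor_tree (\<lambda>s. Y (length s)))"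
    by (rule F_tree_successor_tree)
  then obtain b where b: "is_branch (successor_tree (\<lambda>s. Y (length s))) b" "branch_union b \<in> F"
    using assms(2) by blast
  then have b_finite: "finite (b k)" and b_Y: "b k \<subseteq> Y k" for k
    by (auto simp: is_branch_successor_tree_iff)
  have "almost_subset (branch_union b) (Xs n)" for n
  proof -
    have late: "b k \<subseteq> Xs n" if "n \<le> k" for k
      using b_Y[of k] that by (auto simp: Y_def)
    have "branch_union b - Xs n \<subseteq> (\<Union>k<n. b k)"
    proof
      fix x assume "x \<in> branch_union b - Xs n"
      then obtain k where "x \<in> b k" "x \<notin> Xs n"
        by (auto simp: branch_union_def)
      with late have "k < n"
        by (meson not_less subsetD)
      with \<open>x \<in> b k\<close> show "x \<in> (\<Union>k<n. b k)"
        by blast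
    qed
    moreover have "finite (\<Union>k<n. b k)"
      using b_finite by simp
    ultimately show ?thesis
      unfolding almost_subset_def by (rule finite_subset)
  qed
  with b(2) show "\<exists>X\<in>F. \<forall>n. almost_subset X (Xs n)"
    by blast
qed

lemma non_meager_if_branches_in_filter:
  assumes "is_filter_on_omega F"
    and "\<And>T. F_tree F T \<Longrightarrow> \<exists>b. is_branch T b \<and> branch_union b \<in> F"
  shows "non_meager_filter F"
  unfolding non_meager_filter_def
proof
  assume "meager_in cantor_top (char_fun ` F)"
  then obtain n :: "nat \<Rightarrow> nat \<Rightarrow> nat" and \<tau> :: "nat \<Rightarrow> nat \<Rightarrow> nat set"
    where n: "\<And>k m. m < n k m" and \<tau>: "\<And>k m. \<tau> k m \<subseteq> {m..<n k m}"
    and avoids: "\<And>x. x \<in> char_fun ` F \<Longrightarrow> \<exists>k. \<forall>m. \<exists>i\<in>{m..<n k m}. x i \<noteq> (i \<in> \<tau> k m)"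
    by (rule meager_in_cantor_top_avoids_patterns) blast
  have "F_tree F (successor_tree (\<lambda>s. {n (length s) (frontier n s)..}))"
    using filter_on_omega_atLeast[OF assms(1)] by (rule F_tree_successor_tree)
  then obtain b where b: "is_branch (successor_tree (\<lambda>s. {n (length s) (frontier n s)..})) b"
      "branch_union b \<in> F"
    using assms(2) by blast
  define \<mu> where "\<mu> k = frontier n (map b [0..<k])" for k
  define \<nu> where "\<nu> k = n k (\<mu> k)" for k
  have b_finite: "finite (b k)" and b_above: "b k \<subseteq> {\<nu> k..}" for k
    using b(1) by (auto simp: is_branch_successor_tree_iff \<mu>_def \<nu>_def)
  have \<mu>_Suc: "\<mu> (Suc k) = \<nu> k + Suc (\<Sum>(b k))" for k
    by (simp add: \<mu>_def \<nu>_def)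
  have \<mu>_\<nu>: "\<mu> k < \<nu> k" "\<nu> k \<le> \<mu> (Suc k)" for k
    using n by (simp_all add: \<mu>_Suc \<nu>_def)
  have b_block: "b k \<subseteq> {\<nu> k..<\<mu> (Suc k)}" for k
  proof
    fix i assume "i \<in> b k"
    then have "\<nu> k \<le> i" "i \<le> \<Sum>(b k)"
      using b_above b_finite member_le_sum[of i "b k" id] by auto
    then show "i \<in> {\<nu> k..<\<mu> (Suc k)}"
      by (simp add: \<mu>_Suc)
  qed
  have \<tau>_block: "\<tau> k (\<mu> k) \<subseteq> {\<mu> k..<\<nu> k}" for k
    using \<tau> by (simp add: \<nu>_def)
  define U where "U = (\<Union>k. \<tau> k (\<mu> k)) \<union> branch_union b"
  have "U \<in> F"
    using b(2) by (rule filter_on_omega_mono[OF assms(1)]) (auto simp: U_def)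
  then obtain k where k: "\<forall>m. \<exists>i\<in>{m..<n k m}. (i \<in> U) \<noteq> (i \<in> \<tau> k m)"
    using avoids[of "char_fun U"] by (auto simp: char_fun_def)
  have "U \<inter> {\<mu> k..<\<nu> k} = \<tau> k (\<mu> k)"
    unfolding U_def branch_union_def using \<mu>_\<nu> \<tau>_block b_block by (rule interleaved_intervals_UN_Int)
  with k show False
    by (auto simp: \<nu>_def)
qed

theorem lemma1p3:
  assumes "proper_filter F"
  shows "(non_meager_filter F \<and> P_filter F) \<longleftrightarrow>
         (\<forall>T. F_tree F T \<longrightarrow> (\<exists>b. is_branch T b \<and> branch_union b \<in> F))"
proof -
  have filter: "is_filter_on_omega F"
    using assms by (simp add: proper_filter_def)
  show ?thesis
    using branch_in_filter_if_non_meager_P_filter[OF filter]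
      P_filter_if_branches_in_filter[OF filter] non_meager_if_branches_in_filter[OF filter]
    by blast
qed

end
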